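(* Let $\lambda>0$, $p\in(0,1)$, $\lambda_{max}>0$, $R>0$, and for $q\in[0,1]$ let $f_1(q)=\frac{pq}{p+q-pq}$ and $C_1(q)=\lambda f_1(q)\exp\!\big(-\frac{\lambda f_1(q)}{\lambda_{max}}\big)R$. If $\frac{\lambda_{max}}{\lambda}\le p$, then $q^\star=\frac{p\lambda_{max}}{\lambda p-\lambda_{max}(1-p)}\in(0,1]$ maximizes $C_1$ over $[0,1]$; if $\frac{\lambda_{max}}{\lambda}>p$, then $q^\star=1$ maximizes $C_1$ over $[0,1]$.
   Context: This is the unit battery capacity ($B=1$) case of the ALOHA energy-harvesting model: $f_1(q)$ is the probability that a transmitter (energy arrivals i.i.d. Bernoulli($p$) per slot, battery of capacity $1$, transmits with probability $q$ when the battery is nonempty) transmits in a slot, and $C_1(q)$ is the transmission capacity of a Poisson network of density $\lambda$ with $\lambda_{max}=\frac{1}{d^2\theta^{2/\alpha}\kappa(\alpha)}$, $\kappa(\alpha)=\frac{2\pi^2}{\alpha\sin(2\pi/\alpha)}$, $R=\log(1+\theta)$. *)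

theory Defs
  imports Complex_Main
begin

definition f1 :: "real \<Rightarrow> real \<Rightarrow> real" where
  "f1 p q = p * q / (p + q - p * q)"

definition C1 :: "real \<Rightarrow> real \<Rightarrow> real \<Rightarrow> real \<Rightarrow> real \<Rightarrow> real" where
  "C1 lam p lmax R q = lam * f1 p q * exp (- (lam * f1 p q / lmax)) * R"

end

theory Submission
  imports Defs
begin

text \<open>
  \<open>C1\<close> is \<open>R\<close> times \<open>h (\<lambda> f1 q)\<close> with \<open>h x = x e\<^sup>-\<^sup>x\<^sup>/\<^sup>\<lambda>\<^sub>m\<^sub>a\<^sub>x\<close>, which increases on
  \<open>[0, \<lambda>\<^sub>m\<^sub>a\<^sub>x]\<close> and is globally maximal at \<open>\<lambda>\<^sub>m\<^sub>a\<^sub>x\<close>, while \<open>f1\<close> maps \<open>[0,1]\<close> into \<open>[0,p]\<close>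
  with \<open>f1 1 = p\<close>. If \<open>\<lambda> p \<ge> \<lambda>\<^sub>m\<^sub>a\<^sub>x\<close>, then \<open>q\<^sup>*\<close> solves \<open>\<lambda> f1 q = \<lambda>\<^sub>m\<^sub>a\<^sub>x\<close> in \<open>(0,1]\<close>;
  otherwise every argument \<open>\<lambda> f1 q\<close> lies in \<open>[0, \<lambda> p] \<subseteq> [0, \<lambda>\<^sub>m\<^sub>a\<^sub>x]\<close>, so \<open>q = 1\<close> is best.
\<close>

lemma mult_exp_neg_divide_le:
  fixes x m :: real
  assumes "m > 0"
  shows "x * exp (- (x / m)) \<le> m * exp (- 1)"
proof -
  have "x / m \<le> exp (x / m - 1)"
    using exp_ge_add_one_self[of "x / m - 1"] by simp
  then have "x / m * exp (- (x / m)) \<le> exp (x / m - 1) * exp (- (x / m))"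
    by (intro mult_right_mono) auto
  also have "\<dots> = exp (- 1)"
    by (simp add: exp_add[symmetric])
  finally have "m * (x / m * exp (- (x / m))) \<le> m * exp (- 1)"
    using assms by (intro mult_left_mono) auto
  then show ?thesis
    using assms by simp
qed

lemma mono_on_mult_exp_neg_divide:
  fixes m :: real
  assumes "m > 0"
  shows "mono_on {0..m} (\<lambda>x. x * exp (- (x / m)))"
proof (rule mono_onI)
  fix x y :: real
  assume "x \<in> {0..m}" "y \<in> {0..m}" "x \<le> y"
  then have x: "0 \<le> x" and xy: "x \<le> y" and y: "y \<le> m" by auto
  show "x * exp (- (x / m)) \<le> y * exp (- (y / m))"
  proof (cases "y = 0")
    case True
    then show ?thesis using x xy by simp
  next
    case False
    with x xy have y_pos: "y > 0" by simp
    have "1 - (y - x) / y \<le> 1 - (y - x) / m"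
      using xy y y_pos by (intro diff_left_mono divide_left_mono) auto
    also have "\<dots> \<le> exp (- ((y - x) / m))"
      using exp_ge_add_one_self[of "- ((y - x) / m)"] by simp
    finally have "x \<le> y * exp (- ((y - x) / m))"
      using y_pos by (simp add: field_simps)
    then have "x * exp (- (x / m)) \<le> y * exp (- ((y - x) / m)) * exp (- (x / m))"
      by (intro mult_right_mono) auto
    also have "\<dots> = y * exp (- (y / m))"
      by (simp add: mult.assoc exp_add[symmetric] diff_divide_distrib)
    finally show ?thesis .
  qed
qed

lemma f1_denominator_pos:
  fixes p q :: real
  assumes "0 < p" "p \<le> 1" "0 \<le> q"
  shows "p + q - p * q > 0"
proof -
  have "q * (1 - p) \<ge> 0" using assms by simp
  then show ?thesis using assms by (simp add: algebra_simps)
qed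

lemma f1_nonneg:
  fixes p q :: real
  assumes "0 < p" "p \<le> 1" "0 \<le> q"
  shows "0 \<le> f1 p q"
  using f1_denominator_pos[OF assms] assms unfolding f1_def by simp

lemma f1_le:
  fixes p q :: real
  assumes "0 < p" "p \<le> 1" "0 \<le> q" "q \<le> 1"
  shows "f1 p q \<le> p"
proof -
  have "p * p * (1 - q) \<ge> 0" using assms by simp
  then have "p * q \<le> p * (p + q - p * q)" by (simp add: algebra_simps)
  then show ?thesis
    using f1_denominator_pos[of p q] assms unfolding f1_def by (simp add: divide_le_eq)
qed

lemma f1_one [simp]: "f1 p 1 = p"
  unfolding f1_def by simp

lemma f1_preimage:
  fixes p y :: real
  assumes "0 < p" "p < 1" "0 < y" "y \<le> p"
  defines "q \<equiv> p * y / (p - y * (1 - p))"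
  shows "0 < q" and "q \<le> 1" and "f1 p q = y"
proof -
  define D where "D = p - y * (1 - p)"
  have "y * (1 - p) = y - y * p" by (simp add: algebra_simps)
  moreover have "y * p > 0" using assms by simp
  ultimately have D_pos: "D > 0" unfolding D_def using assms by linarith
  have q_eq: "q = p * y / D" unfolding q_def D_def ..
  then show "0 < q"
    using D_pos assms by simp
  show "q \<le> 1"
    unfolding q_eq using D_pos assms by (simp add: divide_le_eq D_def algebra_simps)
  have "p + q - p * q = (p * D + p * y * (1 - p)) / D"
    unfolding q_eq using D_pos by (simp add: field_simps)
  also have "p * D + p * y * (1 - p) = p * p"
    unfolding D_def by (simp add: algebra_simps)
  finally have "f1 p q = p * q / (p * p / D)"
    unfolding f1_def by simp
  also have "\<dots> = y"
    unfolding q_eq using D_pos assms by (simp add: field_simps)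
  finally show "f1 p q = y" .
qed

lemma C1_altdef:
  "C1 lam p lmax R q = R * (lam * f1 p q * exp (- (lam * f1 p q / lmax)))"
  unfolding C1_def by simp

lemma C1_le_of_lam_f1_eq_lmax:
  fixes lam p lmax R q qs :: real
  assumes "lmax > 0" "R \<ge> 0" "lam * f1 p qs = lmax"
  shows "C1 lam p lmax R q \<le> C1 lam p lmax R qs"
proof -
  have "lam * f1 p q * exp (- (lam * f1 p q / lmax)) \<le> lmax * exp (- (lmax / lmax))"
    using mult_exp_neg_divide_le[OF \<open>lmax > 0\<close>] \<open>lmax > 0\<close> by simp
  then show ?thesis
    unfolding C1_altdef assms(3) using \<open>R \<ge> 0\<close> by (intro mult_left_mono)
qed

lemma C1_le_of_lam_f1_le:
  fixes lam p lmax R q q' :: real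
  assumes "lmax > 0" "R \<ge> 0"
    and "0 \<le> lam * f1 p q" "lam * f1 p q \<le> lam * f1 p q'" "lam * f1 p q' \<le> lmax"
  shows "C1 lam p lmax R q \<le> C1 lam p lmax R q'"
proof -
  have "lam * f1 p q \<in> {0..lmax}" "lam * f1 p q' \<in> {0..lmax}"
    using assms(3-5) by auto
  then have "lam * f1 p q * exp (- (lam * f1 p q / lmax))
      \<le> lam * f1 p q' * exp (- (lam * f1 p q' / lmax))"
    using assms(4) by (rule mono_onD[OF mono_on_mult_exp_neg_divide[OF \<open>lmax > 0\<close>]])
  then show ?thesis
    unfolding C1_altdef using \<open>R \<ge> 0\<close> by (intro mult_left_mono)
qed

theorem corollary1:
  fixes lam p lmax R :: real
  assumes "lam > 0" and "0 < p" and "p < 1" and "lmax > 0" and "R > 0"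
  shows "(lmax / lam \<le> p \<longrightarrow>
           (let qs = p * lmax / (lam * p - lmax * (1 - p)) in
              0 < qs \<and> qs \<le> 1 \<and>
              (\<forall>q\<in>{0..1}. C1 lam p lmax R q \<le> C1 lam p lmax R qs)))
       \<and> (lmax / lam > p \<longrightarrow>
           (\<forall>q\<in>{0..1}. C1 lam p lmax R q \<le> C1 lam p lmax R 1))"
proof (intro conjI impI)
  assume "lmax / lam \<le> p"
  define qs where "qs = p * lmax / (lam * p - lmax * (1 - p))"
  have qs_alt: "qs = p * (lmax / lam) / (p - lmax / lam * (1 - p))"
    unfolding qs_def using assms by (simp add: field_simps)
  have "lmax / lam > 0" using assms by simp
  note f1_preimage[OF \<open>0 < p\<close> \<open>p < 1\<close> this \<open>lmax / lam \<le> p\<close>, folded qs_alt]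
  moreover have "C1 lam p lmax R q \<le> C1 lam p lmax R qs" for q
    using C1_le_of_lam_f1_eq_lmax \<open>f1 p qs = lmax / lam\<close> assms by simp
  ultimately show "let qs = p * lmax / (lam * p - lmax * (1 - p)) in
      0 < qs \<and> qs \<le> 1 \<and> (\<forall>q\<in>{0..1}. C1 lam p lmax R q \<le> C1 lam p lmax R qs)"
    unfolding qs_def Let_def by simp
next
  assume "lmax / lam > p"
  then have "lam * f1 p 1 \<le> lmax" using assms by (simp add: less_divide_eq mult.commute)
  moreover have "0 \<le> f1 p q" "f1 p q \<le> f1 p 1" if "q \<in> {0..1}" for q
    using f1_nonneg[of p q] f1_le[of p q] that assms by simp_all
  ultimately show "\<forall>q\<in>{0..1}. C1 lam p lmax R q \<le> C1 lam p lmax R 1"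
    using C1_le_of_lam_f1_le[of lmax R lam p _ 1] assms by simp
qed

end
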